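(* For every odd $k\ge3$, the map $p\in[0,p_k^\star]\mapsto\varphi^-_{p,k}$ is increasing.
   Context: For odd $k$, $p,x\in[0,1]$: $F_{p,k}(x)=\Pr[\mathrm{Bin}(k,(1-p)x)\ge(k+1)/2]$. $p_k^\star\in[1/9,1/2)$ is the (unique) value such that for $0\le p<p_k^\star$ the equation $F_{p,k}(x)=x$ on $[0,1]$ has exactly three solutions $0<\varphi^-_{p,k}<\varphi^+_{p,k}$; for $p=p_k^\star$ exactly two solutions $0$ and $\varphi_{p,k}$, and one sets $\varphi^-_{p_k^\star,k}=\varphi^+_{p_k^\star,k}=\varphi_{p_k^\star,k}$; for $p>p_k^\star$ only $0$. *)

theory Defs
  imports "HOL-Analysis.Analysis"
begin

text \<open>F_{p,k}(x) = Pr[Bin(k,(1-p)x) >= (k+1)/2], written out as the binomial tail sum.\<close>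
definition F :: "real \<Rightarrow> nat \<Rightarrow> real \<Rightarrow> real" where
  "F p k x = (\<Sum>i\<in>{(k+1) div 2..k}. real (k choose i) * ((1-p)*x)^i * (1 - (1-p)*x)^(k-i))"

definition fixpts :: "real \<Rightarrow> nat \<Rightarrow> real set" where
  "fixpts p k = {x \<in> {0..1}. F p k x = x}"

definition pstar :: "nat \<Rightarrow> real" where
  "pstar k = (THE p. 1/9 \<le> p \<and> p < 1/2 \<and>
      (\<forall>q. 0 \<le> q \<and> q < p \<longrightarrow> card (fixpts q k) = 3) \<and>
      card (fixpts p k) = 2 \<and>
      (\<forall>q. p < q \<and> q \<le> 1 \<longrightarrow> fixpts q k = {0}))"

definition phi_minus :: "real \<Rightarrow> nat \<Rightarrow> real" where
  "phi_minus p k = Inf (fixpts p k - {0})"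

end

theory Submission
  imports Defs
begin

text \<open>Write k = 2m+1 and let G = majority m, G(y) = Pr[Bin(2m+1, y) > m], so that
  F_{p,k}(x) = G((1-p)x). The substitution y = (1-p)x maps the nonzero fixed points onto the
  solutions y in (0,1] of h(y) = 1/(1-p), where h = majority_ratio m is G(y)/y, and the fixed
  point is recovered as x = G(y). Since G'(y) = (2m+1) binom(2m,m) (y(1-y))^m, the numerator
  y G' - G of h' increases on [0,1/2] and decreases on [1/2,1], from 0 to -1; so h increases up
  to some c in (1/2,1) and decreases after it, with h(0+) = G'(0) = 0 and h(1) = 1. Hence
  p_k* = 1 - 1/h(c), and for p <= p_k* the smallest nonzero fixed point is G(y(p)) with y(p)
  the solution on the increasing branch of h; as p grows, 1/(1-p) grows, hence so do y(p) and
  G(y(p)). The bounds 1/9 <= p_k* < 1/2 follow from h(c) <= 1/c < 2 and h(c) >= h(3/4) >= 9/8,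
  the latter because G(3/4) increases with m.\<close>

lemma strict_mono_on_if_deriv_pos:
  fixes f f' :: "real \<Rightarrow> real"
  assumes "convex S" and "continuous_on S f"
    and "\<And>x. x \<in> interior S \<Longrightarrow> (f has_real_derivative f' x) (at x)"
    and "\<And>x. x \<in> interior S \<Longrightarrow> f' x > 0"
  shows "strict_mono_on S f"
proof (rule strict_mono_onI)
  fix a b assume ab: "a \<in> S" "b \<in> S" "a < b"
  have "closed_segment a b \<subseteq> S"
    using ab \<open>convex S\<close> by (simp add: convex_contains_segment)
  then have sub: "{a..b} \<subseteq> S"
    using \<open>a < b\<close> by (simp add: closed_segment_eq_real_ivl)
  then have inner: "{a<..<b} \<subseteq> interior S"
    by (metis interior_atLeastAtMost_real interior_mono)
  show "f a < f b"
  proof (rule DERIV_pos_imp_increasing_open[OF \<open>a < b\<close>])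
    show "continuous_on {a..b} f"
      using assms(2) sub by (rule continuous_on_subset)
  next
    fix x assume "a < x" "x < b"
    then have "x \<in> interior S"
      using inner by auto
    then show "\<exists>y. (f has_real_derivative y) (at x) \<and> y > 0"
      using assms(3,4) by blast
  qed
qed

lemma strict_antimono_on_if_deriv_neg:
  fixes f f' :: "real \<Rightarrow> real"
  assumes "convex S" and "continuous_on S f"
    and "\<And>x. x \<in> interior S \<Longrightarrow> (f has_real_derivative f' x) (at x)"
    and "\<And>x. x \<in> interior S \<Longrightarrow> f' x < 0"
  shows "strict_antimono_on S f"
proof -
  have "strict_mono_on S (\<lambda>x. - f x)"
    using assms by (intro strict_mono_on_if_deriv_pos[where f' = "\<lambda>x. - f' x"])
      (auto intro: continuous_on_minus DERIV_minus)
  then show ?thesis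
    by (auto simp: monotone_on_def)
qed

lemma has_real_derivative_Bernstein_Suc:
  assumes "j \<le> n"
  shows "(Bernstein (Suc n) (Suc j) has_real_derivative
           real (Suc n) * (Bernstein n j y - Bernstein n (Suc j) y)) (at y)"
proof (cases "j = n")
  case True
  have "((\<lambda>y. y ^ Suc n) has_real_derivative real (Suc n) * y ^ n) (at y)"
    by (rule derivative_eq_intros refl)+ simp
  then show ?thesis
    using True by (simp add: Bernstein_def[abs_def] binomial_eq_0)
next
  case False
  then obtain d where d: "n - j = Suc d"
    using assms by (metis Suc_diff_Suc le_neq_implies_less)
  then have d': "n - Suc j = d"
    by simp
  define A where "A = real (Suc n choose Suc j)"
  have absorb_left: "real (Suc j) * A = real (Suc n) * real (n choose j)"
    using binomial_absorption[of j "Suc n"] unfolding A_def by (metis diff_Suc_1 of_nat_mult)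
  have absorb_right: "real (Suc d) * A = real (Suc n) * real (n choose Suc j)"
    using binomial_absorb_comp[of "Suc n" "Suc j"] d unfolding A_def
    by (metis diff_Suc_1 diff_Suc_Suc of_nat_mult)
  have Bernstein_eq: "Bernstein (Suc n) (Suc j) = (\<lambda>y. A * y ^ Suc j * (1 - y) ^ Suc d)"
    using d by (simp add: Bernstein_def[abs_def] A_def)
  have deriv: "((\<lambda>y. A * y ^ Suc j * (1 - y) ^ Suc d) has_real_derivative
      (real (Suc j) * A) * y ^ j * (1 - y) ^ Suc d - (real (Suc d) * A) * y ^ Suc j * (1 - y) ^ d) (at y)"
    by (rule derivative_eq_intros refl)+ (simp add: algebra_simps)
  have deriv_eq: "(real (Suc j) * A) * y ^ j * (1 - y) ^ Suc d - (real (Suc d) * A) * y ^ Suc j * (1 - y) ^ d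
      = real (Suc n) * (Bernstein n j y - Bernstein n (Suc j) y)"
    unfolding absorb_left absorb_right by (simp add: Bernstein_def algebra_simps d d')
  show ?thesis
    using deriv unfolding Bernstein_eq deriv_eq .
qed

lemma has_real_derivative_Bernstein_tail:
  assumes "j \<le> n"
  shows "((\<lambda>y. \<Sum>i = Suc j..Suc n. Bernstein (Suc n) i y) has_real_derivative
           real (Suc n) * Bernstein n j y) (at y)"
proof -
  have "((\<lambda>y. \<Sum>i = j..n. Bernstein (Suc n) (Suc i) y) has_real_derivative
      (\<Sum>i = j..n. real (Suc n) * (Bernstein n i y - Bernstein n (Suc i) y))) (at y)"
    by (intro DERIV_sum has_real_derivative_Bernstein_Suc) simp
  moreover have "(\<Sum>i = j..n. Bernstein n i y - Bernstein n (Suc i) y) = Bernstein n j y"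
    using sum_Suc_diff[of j n "\<lambda>i. - Bernstein n i y"] assms
    by (simp add: Bernstein_def binomial_eq_0)
  ultimately show ?thesis
    by (simp only: sum.shift_bounds_cl_Suc_ivl sum_distrib_left[symmetric])
qed

definition majority :: "nat \<Rightarrow> real \<Rightarrow> real" where
  "majority m y = (\<Sum>i = Suc m..Suc (2*m). Bernstein (Suc (2*m)) i y)"

definition majority_coeff :: "nat \<Rightarrow> real" where
  "majority_coeff m = real (Suc (2*m)) * real (2*m choose m)"

lemma F_odd_eq_majority: "F p (Suc (2*m)) x = majority m ((1 - p) * x)"
proof -
  have "(Suc (2*m) + 1) div 2 = Suc m"
    by simp
  then show ?thesis
    unfolding F_def majority_def Bernstein_def by (simp only:)
qed

lemma majority_coeff_pos: "majority_coeff m > 0"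
  by (simp add: majority_coeff_def)

lemma majority_has_real_derivative:
  "(majority m has_real_derivative majority_coeff m * (y * (1 - y)) ^ m) (at y)"
proof -
  have "(majority m has_real_derivative real (Suc (2*m)) * Bernstein (2*m) m y) (at y)"
    unfolding majority_def[abs_def] by (rule has_real_derivative_Bernstein_tail) simp
  moreover have "Bernstein (2*m) m y = real (2*m choose m) * (y * (1 - y)) ^ m"
    by (simp add: Bernstein_def power_mult_distrib)
  ultimately show ?thesis
    by (simp add: majority_coeff_def mult.assoc)
qed

lemma continuous_on_majority: "continuous_on S (majority m)"
  using majority_has_real_derivative by (meson DERIV_isCont continuous_at_imp_continuous_on)

lemma majority_0 [simp]: "majority m 0 = 0"
  by (auto simp: majority_def Bernstein_def intro!: sum.neutral)

lemma majority_1 [simp]: "majority m 1 = 1"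
proof -
  have "(\<Sum>i = Suc m..2*m. Bernstein (Suc (2*m)) i 1) = 0"
    by (intro sum.neutral) (auto simp: Bernstein_def)
  moreover have "Bernstein (Suc (2*m)) (Suc (2*m)) 1 = 1"
    by (simp add: Bernstein_def)
  ultimately show ?thesis
    unfolding majority_def by (simp add: sum.cl_ivl_Suc)
qed

lemma strict_mono_on_majority: "strict_mono_on {0..1} (majority m)"
  by (rule strict_mono_on_if_deriv_pos[OF _ continuous_on_majority majority_has_real_derivative])
    (auto intro!: mult_pos_pos zero_less_power majority_coeff_pos)

lemma majority_in_unit_interval: "y \<in> {0..1} \<Longrightarrow> majority m y \<in> {0..1}"
  using strict_mono_on_less_eq[OF strict_mono_on_majority, of 0 y m]
    strict_mono_on_less_eq[OF strict_mono_on_majority, of y 1 m] by auto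

definition majority_ratio :: "nat \<Rightarrow> real \<Rightarrow> real" where
  "majority_ratio m y = majority m y / y"

definition majority_ratio_numer :: "nat \<Rightarrow> real \<Rightarrow> real" where
  "majority_ratio_numer m y = y * (majority_coeff m * (y * (1 - y)) ^ m) - majority m y"

lemma majority_ratio_has_real_derivative:
  "y \<noteq> 0 \<Longrightarrow> (majority_ratio m has_real_derivative majority_ratio_numer m y / y\<^sup>2) (at y)"
  unfolding majority_ratio_def[abs_def] majority_ratio_numer_def
  by (rule derivative_eq_intros refl majority_has_real_derivative)+ (auto simp: power2_eq_square)

lemma majority_ratio_numer_has_real_derivative:
  "(majority_ratio_numer m has_real_derivative
     majority_coeff m * real m * y * (y * (1 - y)) ^ (m - 1) * (1 - 2 * y)) (at y)"
proof -
  have "((\<lambda>y. (y * (1 - y)) ^ m) has_real_derivative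
      real m * (y * (1 - y)) ^ (m - 1) * (1 - 2 * y)) (at y)"
    by (rule derivative_eq_intros refl)+ simp
  from DERIV_mult[OF DERIV_ident DERIV_cmult[OF this, of "majority_coeff m"]]
  have "((\<lambda>y. y * (majority_coeff m * (y * (1 - y)) ^ m)) has_real_derivative
      majority_coeff m * (y * (1 - y)) ^ m
      + majority_coeff m * real m * y * (y * (1 - y)) ^ (m - 1) * (1 - 2 * y)) (at y)"
    by (simp add: algebra_simps)
  from DERIV_diff[OF this majority_has_real_derivative[of m]] show ?thesis
    unfolding majority_ratio_numer_def[abs_def] by simp
qed

lemma continuous_on_majority_ratio_numer: "continuous_on S (majority_ratio_numer m)"
  using majority_ratio_numer_has_real_derivative
  by (meson DERIV_isCont continuous_at_imp_continuous_on)

lemma majority_ratio_numer_sign: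
  assumes "1 \<le> m"
  obtains c where "1/2 < c" "c < 1"
    and "\<And>y. 0 < y \<Longrightarrow> y < c \<Longrightarrow> majority_ratio_numer m y > 0"
    and "\<And>y. c < y \<Longrightarrow> y \<le> 1 \<Longrightarrow> majority_ratio_numer m y < 0"
proof -
  let ?u = "majority_ratio_numer m"
  have inc: "strict_mono_on {0..1/2} ?u"
    using assms
    by (intro strict_mono_on_if_deriv_pos[OF _ continuous_on_majority_ratio_numer
          majority_ratio_numer_has_real_derivative])
      (auto intro!: mult_pos_pos zero_less_power majority_coeff_pos)
  have dec: "strict_antimono_on {1/2..1} ?u"
    using assms
    by (intro strict_antimono_on_if_deriv_neg[OF _ continuous_on_majority_ratio_numer
          majority_ratio_numer_has_real_derivative])
      (auto intro!: mult_pos_neg mult_pos_pos zero_less_power majority_coeff_pos)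
  have u0: "?u 0 = 0" and u1: "?u 1 = -1"
    using assms by (simp_all add: majority_ratio_numer_def)
  have "?u (1/2) > 0"
    using strict_mono_onD[OF inc, of 0 "1/2"] u0 by simp
  then obtain c where c: "1/2 \<le> c" "c \<le> 1" "?u c = 0"
    using IVT2'[of ?u 1 0 "1/2", OF _ _ _ continuous_on_majority_ratio_numer] u1 by auto
  moreover have "c \<noteq> 1/2"
    using \<open>?u (1/2) > 0\<close> c(3) by (metis less_irrefl)
  moreover have "c \<noteq> 1"
    using u1 c(3) by auto
  ultimately have "1/2 < c" "c < 1"
    by auto
  then show thesis
  proof (rule that)
    fix y assume "0 < y" "y < c"
    then show "?u y > 0"
      using strict_mono_onD[OF inc, of 0 y] monotone_onD[OF dec, of y c] u0 c
      by (cases "y \<le> 1/2") auto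
  next
    fix y assume "c < y" "y \<le> 1"
    then show "?u y < 0"
      using monotone_onD[OF dec, of c y] c by auto
  qed
qed

lemma continuous_on_majority_ratio: "0 \<notin> S \<Longrightarrow> continuous_on S (majority_ratio m)"
  unfolding majority_ratio_def[abs_def]
  by (intro continuous_on_divide continuous_on_majority continuous_on_id) auto

lemma majority_ratio_unimodal:
  assumes "1 \<le> m"
  obtains c where "1/2 < c" "c < 1"
    and "strict_mono_on {0<..c} (majority_ratio m)"
    and "strict_antimono_on {c..1} (majority_ratio m)"
proof -
  obtain c where c: "1/2 < c" "c < 1"
    and pos: "\<And>y. 0 < y \<Longrightarrow> y < c \<Longrightarrow> majority_ratio_numer m y > 0"
    and neg: "\<And>y. c < y \<Longrightarrow> y \<le> 1 \<Longrightarrow> majority_ratio_numer m y < 0"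
    using majority_ratio_numer_sign[OF assms] by blast
  have "strict_mono_on {0<..c} (majority_ratio m)"
    using c pos
    by (intro strict_mono_on_if_deriv_pos[where f' = "\<lambda>y. majority_ratio_numer m y / y\<^sup>2"]
        continuous_on_majority_ratio)
      (auto intro: majority_ratio_has_real_derivative)
  moreover have "strict_antimono_on {c..1} (majority_ratio m)"
    using c neg
    by (intro strict_antimono_on_if_deriv_neg[where f' = "\<lambda>y. majority_ratio_numer m y / y\<^sup>2"]
        continuous_on_majority_ratio)
      (auto intro: majority_ratio_has_real_derivative divide_neg_pos)
  ultimately show thesis
    using that c by blast
qed

lemma majority_ratio_1 [simp]: "majority_ratio m 1 = 1"
  by (simp add: majority_ratio_def)

lemma majority_ratio_tendsto_0:
  assumes "1 \<le> m"
  shows "(majority_ratio m \<longlongrightarrow> 0) (at_right 0)"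
proof -
  have "(majority_ratio m \<longlongrightarrow> 0) (at 0)"
    using majority_has_real_derivative[of m 0] assms
    unfolding DERIV_def majority_ratio_def[abs_def] by (simp add: power_0_left)
  then show ?thesis
    by (simp add: filterlim_at_split)
qed

lemma Suc_times_central_binomial_Suc:
  "Suc m * (2 * Suc m choose Suc m) = 2 * Suc (2*m) * (2*m choose m)"
proof -
  have "Suc (2*m) choose m = Suc (2*m) choose Suc m"
    using binomial_symmetric[of m "Suc (2*m)"] by (simp del: binomial_Suc_Suc)
  then have "2 * Suc m choose Suc m = 2 * (Suc (2*m) choose Suc m)"
    using binomial_Suc_Suc[of "Suc (2*m)" m] by (simp del: binomial_Suc_Suc)
  then show ?thesis
    using Suc_times_binomial[of m "2*m"] by (simp del: binomial_Suc_Suc)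
qed

lemma majority_coeff_Suc_le:
  assumes "1 \<le> m"
  shows "3/16 * majority_coeff (Suc m) \<le> majority_coeff m"
proof -
  have "real (Suc m) * majority_coeff (Suc m) = 2 * real (2*m+3) * majority_coeff m"
    using arg_cong[OF Suc_times_central_binomial_Suc[of m], of real]
    by (simp add: majority_coeff_def algebra_simps del: binomial_Suc_Suc)
  then have "real (Suc m) * (3/16 * majority_coeff (Suc m)) = 3/8 * real (2*m+3) * majority_coeff m"
    by (simp add: algebra_simps)
  also have "\<dots> \<le> real (Suc m) * majority_coeff m"
    using assms majority_coeff_pos[of m] by (intro mult_right_mono) auto
  finally show ?thesis
    by simp
qed

lemma majority_le_majority_Suc:
  assumes "1 \<le> m" and "3/4 \<le> y" and "y \<le> 1"
  shows "majority m y \<le> majority (Suc m) y"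
proof -
  define \<delta> where "\<delta> t = majority (Suc m) t - majority m t" for t
  have "\<delta> 1 \<le> \<delta> y"
  proof (rule DERIV_nonpos_imp_decreasing_open[OF \<open>y \<le> 1\<close>])
    fix t assume t: "y < t" "t < 1"
    define x where "x = t * (1 - t)"
    have "0 \<le> (t - 3/4) * (t - 1/4)"
      using t assms(2) by (intro mult_nonneg_nonneg) auto
    moreover have "x = 3/16 - (t - 3/4) * (t - 1/4)"
      by (simp add: x_def field_simps)
    moreover have "0 \<le> x"
      using t assms(2) unfolding x_def by (intro mult_nonneg_nonneg) auto
    ultimately have x: "0 \<le> x" "x \<le> 3/16"
      by linarith+
    have "majority_coeff (Suc m) * x ^ Suc m = (majority_coeff (Suc m) * x) * x ^ m"
      by simp
    also have "\<dots> \<le> (3/16 * majority_coeff (Suc m)) * x ^ m"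
      using x majority_coeff_pos[of "Suc m"] by (intro mult_right_mono) auto
    also have "\<dots> \<le> majority_coeff m * x ^ m"
      using x majority_coeff_Suc_le[OF assms(1)] by (intro mult_right_mono) auto
    finally have "majority_coeff (Suc m) * x ^ Suc m - majority_coeff m * x ^ m \<le> 0"
      by simp
    moreover have "(\<delta> has_real_derivative
        majority_coeff (Suc m) * x ^ Suc m - majority_coeff m * x ^ m) (at t)"
      unfolding \<delta>_def[abs_def] x_def by (intro DERIV_diff majority_has_real_derivative)
    ultimately show "\<exists>d. (\<delta> has_real_derivative d) (at t) \<and> d \<le> 0"
      by blast
  next
    show "continuous_on {y..1} \<delta>"
      unfolding \<delta>_def[abs_def] by (intro continuous_on_diff continuous_on_majority)
  qed
  then show ?thesis
    by (simp add: \<delta>_def)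
qed

lemma majority_three_quarters_ge:
  assumes "1 \<le> m"
  shows "27/32 \<le> majority m (3/4)"
  using assms
proof (induction m rule: dec_induct)
  case base
  have "{Suc 1..Suc (2*1)} = {2, 3::nat}" and "(3::nat) choose 2 = 3"
    by (auto simp: choose_two)
  then show ?case
    by (simp add: majority_def Bernstein_def power2_eq_square power3_eq_cube)
next
  case (step m)
  then show ?case
    using majority_le_majority_Suc[of m "3/4"] by simp
qed

locale unimodal =
  fixes h :: "real \<Rightarrow> real" and a b c :: real
  assumes continuous: "continuous_on {a<..b} h"
    and peak_between: "a < c" "c < b"
    and strict_mono_below_peak: "strict_mono_on {a<..c} h"
    and strict_antimono_above_peak: "strict_antimono_on {c..b} h"
begin

lemma less_at_peak: "y \<in> {a<..b} \<Longrightarrow> y \<noteq> c \<Longrightarrow> h y < h c"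
  using strict_mono_onD[OF strict_mono_below_peak, of y c]
    monotone_onD[OF strict_antimono_above_peak, of c y] peak_between
  by (cases "y < c") auto

lemma level_set_above_peak: "h c < L \<Longrightarrow> {y \<in> {a<..b}. h y = L} = {}"
  using less_at_peak by force

lemma level_set_at_peak: "{y \<in> {a<..b}. h y = h c} = {c}"
  using less_at_peak peak_between by force

lemma level_set_below_peak:
  assumes "(h \<longlongrightarrow> l) (at_right a)" and "l < L" and "h b \<le> L" and "L < h c"
  obtains y1 y2 where "a < y1" "y1 < c" "c < y2" "{y \<in> {a<..b}. h y = L} = {y1, y2}"
proof -
  obtain d where "d > a" and d: "\<And>y. a < y \<Longrightarrow> y < d \<Longrightarrow> h y < L"
    using order_tendstoD(2)[OF assms(1,2)] by (auto simp: eventually_at_right_field)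
  define y0 where "y0 = (a + min c d) / 2"
  have y0: "a < y0" "y0 < c" "h y0 < L"
    using peak_between \<open>d > a\<close> d[of y0] by (auto simp: y0_def)
  obtain y1 where y1: "y0 \<le> y1" "y1 \<le> c" "h y1 = L"
    using IVT'[of h y0 L c] continuous_on_subset[OF continuous, of "{y0..c}"]
      y0 assms(4) peak_between
    by fastforce
  obtain y2 where y2: "c \<le> y2" "y2 \<le> b" "h y2 = L"
    using IVT2'[of h b L c] continuous_on_subset[OF continuous, of "{c..b}"]
      assms(3,4) peak_between
    by fastforce
  have "y1 \<noteq> c" "y2 \<noteq> c"
    using y1 y2 assms(4) by auto
  have "{y \<in> {a<..b}. h y = L} = {y1, y2}"
  proof (intro equalityI subsetI)
    fix y assume y: "y \<in> {y \<in> {a<..b}. h y = L}"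
    show "y \<in> {y1, y2}"
    proof (cases "y \<le> c")
      case True
      then have "y = y1"
        using strict_mono_on_eq[OF strict_mono_below_peak, of y y1] y y0 y1 by auto
      then show ?thesis
        by simp
    next
      case False
      then have "y = y2"
        using monotone_onD[OF strict_antimono_above_peak, of y y2]
          monotone_onD[OF strict_antimono_above_peak, of y2 y] y y2
        by (cases y y2 rule: linorder_cases) auto
      then show ?thesis
        by simp
    qed
  qed (use y0 y1 y2 in auto)
  with y0 y1 y2 \<open>y1 \<noteq> c\<close> \<open>y2 \<noteq> c\<close> show thesis
    by (intro that[of y1 y2]) auto
qed

end

lemma one_div_one_minus_less_iff:
  fixes p M :: real
  assumes "0 < M" and "p < 1"
  shows "1 / (1 - p) < M \<longleftrightarrow> p < 1 - 1 / M"
    and "M < 1 / (1 - p) \<longleftrightarrow> 1 - 1 / M < p"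
  using assms by (auto simp: field_simps)

lemma fixpts_odd:
  assumes "0 \<le> p" and "p < 1"
  shows "fixpts p (Suc (2*m)) =
    insert 0 (majority m ` {y \<in> {0<..1}. majority_ratio m y = 1 / (1 - p)})"
proof (intro equalityI subsetI)
  fix x assume "x \<in> fixpts p (Suc (2*m))"
  then have x: "0 \<le> x" "x \<le> 1" "majority m ((1 - p) * x) = x"
    by (auto simp: fixpts_def F_odd_eq_majority)
  show "x \<in> insert 0 (majority m ` {y \<in> {0<..1}. majority_ratio m y = 1 / (1 - p)})"
  proof (cases "x = 0")
    case False
    have "(1 - p) * x \<in> {0<..1}"
      using assms x False by (auto intro: mult_le_one)
    moreover have "majority_ratio m ((1 - p) * x) = 1 / (1 - p)"
      using assms x False by (simp add: majority_ratio_def)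
    ultimately show ?thesis
      using x(3) by (intro insertI2 image_eqI[of x _ "(1 - p) * x"]) auto
  qed simp
next
  fix x assume "x \<in> insert 0 (majority m ` {y \<in> {0<..1}. majority_ratio m y = 1 / (1 - p)})"
  then show "x \<in> fixpts p (Suc (2*m))"
  proof
    assume "x = 0"
    then show ?thesis
      by (simp add: fixpts_def F_odd_eq_majority)
  next
    assume "x \<in> majority m ` {y \<in> {0<..1}. majority_ratio m y = 1 / (1 - p)}"
    then obtain y where y: "0 < y" "y \<le> 1" "majority_ratio m y = 1 / (1 - p)"
      and x: "x = majority m y"
      by auto
    have "majority m y = y * majority_ratio m y"
      using \<open>0 < y\<close> by (simp add: majority_ratio_def)
    then have "(1 - p) * x = y"
      using x y assms by simp
    then show ?thesis
      using majority_in_unit_interval[of y m] x y by (auto simp: fixpts_def F_odd_eq_majority)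
  qed
qed

locale majority_peak = unimodal "majority_ratio m" 0 1 c for m :: nat and c :: real +
  assumes one_le_m: "1 \<le> m" and half_less_peak: "1/2 < c"
begin

lemma majority_ratio_peak_bounds: "9/8 \<le> majority_ratio m c" "majority_ratio m c < 2"
proof -
  have "9/8 \<le> majority_ratio m (3/4)"
    using majority_three_quarters_ge[OF one_le_m] by (simp add: majority_ratio_def)
  also have "\<dots> \<le> majority_ratio m c"
    using strict_mono_on_less_eq[OF strict_mono_below_peak, of "3/4" c]
      monotone_onD[OF strict_antimono_above_peak, of c "3/4"] peak_between
    by (cases "3/4 \<le> c") auto
  finally show "9/8 \<le> majority_ratio m c" .
  have "majority m c \<le> 1"
    using majority_in_unit_interval[of c m] peak_between by simp
  then show "majority_ratio m c < 2"
    using half_less_peak by (simp add: majority_ratio_def divide_simps)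
qed

lemma fixpts_below_peak:
  assumes "0 \<le> p" and "p < 1 - 1 / majority_ratio m c"
  obtains y1 y2 where "0 < y1" "y1 < c" "c < y2" "y2 \<le> 1" "majority_ratio m y1 = 1 / (1 - p)"
    and "fixpts p (Suc (2*m)) = {0, majority m y1, majority m y2}"
proof -
  have "0 < majority_ratio m c" and "0 < 1 / majority_ratio m c"
    using majority_ratio_peak_bounds by simp_all
  then have "p < 1"
    using assms(2) by linarith
  then have L: "1 \<le> 1 / (1 - p)" "1 / (1 - p) < majority_ratio m c"
    using assms one_div_one_minus_less_iff[OF \<open>0 < majority_ratio m c\<close>] by auto
  obtain y1 y2 where y: "0 < y1" "y1 < c" "c < y2"
    and level: "{y \<in> {0<..1}. majority_ratio m y = 1 / (1 - p)} = {y1, y2}"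
    by (rule level_set_below_peak[OF majority_ratio_tendsto_0[OF one_le_m], of "1 / (1 - p)"])
      (use L \<open>p < 1\<close> in auto)
  then have "y2 \<le> 1" "majority_ratio m y1 = 1 / (1 - p)"
    by auto
  with y show thesis
    using that fixpts_odd[OF assms(1) \<open>p < 1\<close>, of m] unfolding level by auto
qed

lemma fixpts_at_peak:
  "fixpts (1 - 1 / majority_ratio m c) (Suc (2*m)) = {0, majority m c}"
proof -
  have M: "1 < majority_ratio m c"
    using majority_ratio_peak_bounds by simp
  then have "1 / (1 - (1 - 1 / majority_ratio m c)) = majority_ratio m c"
    by simp
  with M show ?thesis
    using fixpts_odd[of "1 - 1 / majority_ratio m c" m] level_set_at_peak by auto
qed

lemma fixpts_above_peak:
  assumes "1 - 1 / majority_ratio m c < p" and "p \<le> 1"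
  shows "fixpts p (Suc (2*m)) = {0}"
proof (cases "p = 1")
  case True
  then show ?thesis
    by (auto simp: fixpts_def F_odd_eq_majority)
next
  case False
  have "0 < majority_ratio m c" and "0 < 1 - 1 / majority_ratio m c"
    using majority_ratio_peak_bounds by simp_all
  then have "majority_ratio m c < 1 / (1 - p)"
    using assms False one_div_one_minus_less_iff by simp
  then have empty: "{y \<in> {0<..1}. majority_ratio m y = 1 / (1 - p)} = {}"
    using level_set_above_peak by simp
  have "fixpts p (Suc (2*m)) =
      insert 0 (majority m ` {y \<in> {0<..1}. majority_ratio m y = 1 / (1 - p)})"
    using assms False \<open>0 < 1 - 1 / majority_ratio m c\<close> by (intro fixpts_odd) auto
  then show ?thesis
    unfolding empty by simp
qed

lemma pstar_odd: "pstar (Suc (2*m)) = 1 - 1 / majority_ratio m c"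
proof -
  let ?k = "Suc (2*m)" and ?P = "1 - 1 / majority_ratio m c"
  have three: "card (fixpts q ?k) = 3" if q: "0 \<le> q" "q < ?P" for q
  proof -
    obtain y1 y2 where y: "0 < y1" "y1 < c" "c < y2" "y2 \<le> 1"
      and "majority_ratio m y1 = 1 / (1 - q)"
      and fixed: "fixpts q ?k = {0, majority m y1, majority m y2}"
      by (rule fixpts_below_peak[OF q])
    have "0 < majority m y1" "majority m y1 < majority m y2"
      using strict_mono_onD[OF strict_mono_on_majority, of 0 y1 m]
        strict_mono_onD[OF strict_mono_on_majority, of y1 y2 m] y peak_between by auto
    then show ?thesis
      unfolding fixed by simp
  qed
  have two: "card (fixpts ?P ?k) = 2"
    using strict_mono_onD[OF strict_mono_on_majority, of 0 c m] peak_between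
    unfolding fixpts_at_peak by simp
  have bounds: "1/9 \<le> ?P" "?P < 1/2"
    using majority_ratio_peak_bounds by (simp_all add: field_simps)
  show ?thesis
    unfolding pstar_def
  proof (rule the_equality)
    show "1/9 \<le> ?P \<and> ?P < 1/2 \<and> (\<forall>q. 0 \<le> q \<and> q < ?P \<longrightarrow> card (fixpts q ?k) = 3) \<and>
        card (fixpts ?P ?k) = 2 \<and> (\<forall>q. ?P < q \<and> q \<le> 1 \<longrightarrow> fixpts q ?k = {0})"
      using bounds two by (simp add: three fixpts_above_peak)
  next
    fix p assume p: "1/9 \<le> p \<and> p < 1/2 \<and> (\<forall>q. 0 \<le> q \<and> q < p \<longrightarrow> card (fixpts q ?k) = 3) \<and>
        card (fixpts p ?k) = 2 \<and> (\<forall>q. p < q \<and> q \<le> 1 \<longrightarrow> fixpts q ?k = {0})"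
    show "p = ?P"
    proof (rule linorder_cases[of p ?P])
      assume "p < ?P"
      then show ?thesis
        using three[of p] p by simp
    next
      assume "?P < p"
      then have "card (fixpts ?P ?k) = 3"
        using p bounds by simp
      with two show ?thesis
        by simp
    qed
  qed
qed

lemma phi_minus_odd:
  assumes "0 \<le> p" and "p \<le> 1 - 1 / majority_ratio m c"
  obtains y where "0 < y" "y \<le> c" "majority_ratio m y = 1 / (1 - p)"
    and "phi_minus p (Suc (2*m)) = majority m y"
proof (cases "p = 1 - 1 / majority_ratio m c")
  case True
  have "majority_ratio m c = 1 / (1 - p)"
    using True majority_ratio_peak_bounds by simp
  moreover have "phi_minus p (Suc (2*m)) = majority m c"
    using True strict_mono_onD[OF strict_mono_on_majority, of 0 c m] peak_between
    by (simp add: phi_minus_def fixpts_at_peak)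
  ultimately show thesis
    using peak_between by (intro that[of c]) auto
next
  case False
  then have "p < 1 - 1 / majority_ratio m c"
    using assms(2) by simp
  then obtain y1 y2 where y: "0 < y1" "y1 < c" "c < y2" "y2 \<le> 1"
    and ratio: "majority_ratio m y1 = 1 / (1 - p)"
    and fixed: "fixpts p (Suc (2*m)) = {0, majority m y1, majority m y2}"
    by (rule fixpts_below_peak[OF assms(1)])
  have "0 < majority m y1" "majority m y1 < majority m y2"
    using strict_mono_onD[OF strict_mono_on_majority, of 0 y1 m]
      strict_mono_onD[OF strict_mono_on_majority, of y1 y2 m] y peak_between by auto
  then have "phi_minus p (Suc (2*m)) = majority m y1"
    unfolding phi_minus_def fixed by (simp add: cInf_eq_Min insert_Diff_if)
  with y ratio show thesis
    by (intro that[of y1]) auto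
qed

end

theorem lemmaA7:
  fixes k :: nat
  assumes "odd k" and "k \<ge> 3"
  shows "strict_mono_on {0..pstar k} (\<lambda>p. phi_minus p k)"
proof -
  obtain m where k: "k = Suc (2*m)"
    using assms(1) by (metis oddE Suc_eq_plus1)
  then have m: "1 \<le> m"
    using assms(2) by simp
  obtain c where "1/2 < c" "c < 1"
    and "strict_mono_on {0<..c} (majority_ratio m)"
    and "strict_antimono_on {c..1} (majority_ratio m)"
    using majority_ratio_unimodal[OF m] by blast
  then interpret majority_peak m c
    using m by unfold_locales (auto intro: continuous_on_majority_ratio)
  show ?thesis
    unfolding k pstar_odd
  proof (rule strict_mono_onI)
    fix r s assume r: "r \<in> {0..1 - 1 / majority_ratio m c}"
      and s: "s \<in> {0..1 - 1 / majority_ratio m c}" and "r < s"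
    obtain y where y: "0 < y" "y \<le> c" "majority_ratio m y = 1 / (1 - r)"
      and phi_r: "phi_minus r (Suc (2*m)) = majority m y"
      by (rule phi_minus_odd) (use r in auto)
    obtain z where z: "0 < z" "z \<le> c" "majority_ratio m z = 1 / (1 - s)"
      and phi_s: "phi_minus s (Suc (2*m)) = majority m z"
      by (rule phi_minus_odd) (use s in auto)
    have "0 < 1 / majority_ratio m c" and "s \<le> 1 - 1 / majority_ratio m c"
      using majority_ratio_peak_bounds s by simp_all
    then have "s < 1"
      by linarith
    then have "1 / (1 - r) < 1 / (1 - s)"
      using \<open>r < s\<close> by (simp add: field_simps)
    then have "y < z"
      using strict_mono_on_less[OF strict_mono_below_peak, of y z] y z by auto
    then show "phi_minus r (Suc (2*m)) < phi_minus s (Suc (2*m))"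
      unfolding phi_r phi_s
      using strict_mono_onD[OF strict_mono_on_majority, of y z m] y z peak_between by auto
  qed
qed

end
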